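(* The lexicographically least infinite binary overlap-free word is $001001\,\overline{\mathbf{t}}$.
   Context: An overlap is a word $axaxa$ with $a$ a letter and $x$ a (possibly empty) word; a word is overlap-free if it contains no overlap as a factor. $\mu$ is the morphism $0\mapsto01$, $1\mapsto10$ on $\{0,1\}$, and $\overline{\mathbf{t}}=\mu^\omega(1)=1001011001101001\cdots$ is the fixed point of $\mu$ beginning with $1$. Infinite binary words are ordered lexicographically with $0<1$. *)

theory Defs
  imports Main
begin

definition binary_word :: "(nat \<Rightarrow> nat) \<Rightarrow> bool" where
  "binary_word w \<longleftrightarrow> (\<forall>i. w i \<in> {0, 1})"

fun mu :: "nat list \<Rightarrow> nat list" where
  "mu [] = []"
| "mu (a # xs) = (if a = 0 then [0, 1] else [1, 0]) @ mu xs"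

text \<open>tbar = mu^omega(1): the n-th letter is the n-th letter of mu^(n+1)(1),
  a word of length 2^(n+1) which is a prefix of all longer iterates.\<close>
definition tbar :: "nat \<Rightarrow> nat" where
  "tbar n = ((mu ^^ Suc n) [1]) ! n"

definition is_overlap :: "nat list \<Rightarrow> bool" where
  "is_overlap u \<longleftrightarrow> (\<exists>a x. u = [a] @ x @ [a] @ x @ [a])"

definition factor :: "(nat \<Rightarrow> nat) \<Rightarrow> nat \<Rightarrow> nat \<Rightarrow> nat list" where
  "factor w i n = map (\<lambda>j. w (i + j)) [0..<n]"

definition overlap_free :: "(nat \<Rightarrow> nat) \<Rightarrow> bool" where
  "overlap_free w \<longleftrightarrow> \<not> (\<exists>i n. is_overlap (factor w i n))"

definition lex_less :: "(nat \<Rightarrow> nat) \<Rightarrow> (nat \<Rightarrow> nat) \<Rightarrow> bool" where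
  "lex_less w v \<longleftrightarrow> (\<exists>n. (\<forall>i<n. w i = v i) \<and> w n < v n)"

definition lex_le :: "(nat \<Rightarrow> nat) \<Rightarrow> (nat \<Rightarrow> nat) \<Rightarrow> bool" where
  "lex_le w v \<longleftrightarrow> w = v \<or> lex_less w v"

definition prepend :: "nat list \<Rightarrow> (nat \<Rightarrow> nat) \<Rightarrow> nat \<Rightarrow> nat" where
  "prepend u w n = (if n < length u then u ! n else w (n - length u))"

end

theory Submission
  imports Defs
begin

(* From this, 1 tbar has only the square prefix 11, 10 tbar = mu_inf(1 tbar) only the
      square prefix 1010, and 00 mu_inf(10 tbar) = 001001 tbar is overlap-free.
   3. Every overlap-free binary word becomes a mu-image after deleting its first one or two
      letters (squares at positions >= 1 all have the same parity).  Consequently a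
      lexicographic descent argument shows that tbar is the least overlap-free binary word
      starting with 1, and a short case analysis on the first six letters gives minimality
      of 001001 tbar. *)

section \<open>Binary words, overlaps and prefixes\<close>

lemma binary_word_iff: "binary_word w \<longleftrightarrow> (\<forall>i. w i \<le> 1)"
  by (auto simp: binary_word_def le_Suc_eq)

definition overlap_at :: "(nat \<Rightarrow> nat) \<Rightarrow> nat \<Rightarrow> nat \<Rightarrow> bool" where
  "overlap_at w i p \<longleftrightarrow> 1 \<le> p \<and> (\<forall>j\<le>p. w (i+j) = w (i+j+p))"

lemma factor_Suc: "factor w i (Suc n) = factor w i n @ [w (i+n)]"
  by (simp add: factor_def)

lemma factor_add: "factor w i (m+n) = factor w i m @ factor w (i+m) n"
  by (induction n) (simp_all add: factor_Suc factor_def add.assoc)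

lemma length_factor [simp]: "length (factor w i n) = n"
  by (simp add: factor_def)

lemma factor_nth: "j < n \<Longrightarrow> factor w i n ! j = w (i+j)"
  by (simp add: factor_def)

lemma overlap_at_imp_is_overlap:
  assumes "overlap_at w i p" shows "is_overlap (factor w i (2*p+1))"
proof -
  have p1: "p \<ge> 1" and per: "\<And>j. j \<le> p \<Longrightarrow> w (i+j) = w (i+j+p)"
    using assms by (auto simp: overlap_at_def)
  define x where "x = factor w (i+1) (p-1)"
  have first: "factor w i p = w i # x"
  proof -
    have "factor w i p = factor w i (1 + (p-1))" using p1 by simp
    also have "\<dots> = factor w i 1 @ x" unfolding x_def by (rule factor_add)
    finally show ?thesis by (simp add: factor_def)
  qed
  have second: "factor w (i+p) p = factor w i p"
    unfolding factor_def using per by (auto simp: add.commute add.left_commute)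
  have last: "w (i + 2*p) = w i" using per[of 0] per[of p] by (simp add: mult_2 add.assoc)
  have "factor w i (2*p+1) = factor w i p @ factor w (i+p) p @ [w (i + 2*p)]"
    by (simp add: factor_Suc mult_2 factor_add)
  also have "\<dots> = [w i] @ x @ [w i] @ x @ [w i]" using first second last by simp
  finally show ?thesis unfolding is_overlap_def by blast
qed

lemma is_overlap_imp_overlap_at:
  assumes "is_overlap (factor w i n)" shows "\<exists>p. overlap_at w i p"
proof -
  obtain a x where e: "factor w i n = [a] @ x @ [a] @ x @ [a]"
    using assms unfolding is_overlap_def by blast
  define p where "p = Suc (length x)"
  have n: "n = 2*p+1" using arg_cong[OF e, of length] by (simp add: p_def)
  have "w (i+j) = w (i+j+p)" if "j \<le> p" for j
  proof -
    have "w (i+j) = factor w i n ! j" using that n by (simp add: factor_nth)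
    moreover have "w (i+j+p) = factor w i n ! (j+p)" using that n by (simp add: factor_nth add.assoc)
    moreover have "([a] @ x @ [a] @ x @ [a]) ! j = ([a] @ x @ [a] @ x @ [a]) ! (j+p)"
      using that unfolding p_def by (cases "j < p") (auto simp: nth_append nth_Cons split: nat.splits)
    ultimately show ?thesis using e by simp
  qed
  then have "overlap_at w i p" unfolding overlap_at_def p_def by auto
  then show ?thesis by blast
qed

lemma overlap_free_iff: "overlap_free w \<longleftrightarrow> (\<forall>i p. \<not> overlap_at w i p)"
  unfolding overlap_free_def using overlap_at_imp_is_overlap is_overlap_imp_overlap_at by blast

lemma overlap_freeD: "overlap_free w \<Longrightarrow> overlap_at w i p \<Longrightarrow> False"
  by (simp add: overlap_free_iff)

lemma overlap_at_1: "w i = w (i+1) \<Longrightarrow> w (i+1) = w (i+2) \<Longrightarrow> overlap_at w i 1"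
  unfolding overlap_at_def by (auto simp: le_Suc_eq)

lemma overlap_at_2:
  "w i = w (i+2) \<Longrightarrow> w (i+1) = w (i+3) \<Longrightarrow> w (i+2) = w (i+4) \<Longrightarrow> overlap_at w i 2"
  unfolding overlap_at_def by (auto simp: le_Suc_eq eval_nat_numeral)

lemma overlap_at_3:
  "w i = w (i+3) \<Longrightarrow> w (i+1) = w (i+4) \<Longrightarrow> w (i+2) = w (i+5) \<Longrightarrow> w (i+3) = w (i+6)
   \<Longrightarrow> overlap_at w i 3"
  unfolding overlap_at_def by (auto simp: le_Suc_eq eval_nat_numeral)

lemma overlap_free_suffix: "overlap_free w \<Longrightarrow> overlap_free (\<lambda>m. w (k+m))"
  unfolding overlap_free_iff overlap_at_def by (metis add.assoc)

lemma prepend_append: "prepend (u @ v) w = prepend u (prepend v w)"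
  by (auto simp: fun_eq_iff prepend_def nth_append)

lemma prepend_Nil [simp]: "prepend [] w = w"
  by (simp add: fun_eq_iff prepend_def)

lemma prepend_Cons_0 [simp]: "prepend (a # u) w 0 = a"
  by (simp add: prepend_def)

lemma prepend_Cons_Suc [simp]: "prepend (a # u) w (Suc n) = prepend u w n"
  by (simp add: prepend_def)

lemma prepend_beyond: "length u \<le> n \<Longrightarrow> prepend u w n = w (n - length u)"
  by (simp add: prepend_def)

lemma binary_prepend: "set u \<subseteq> {0,1} \<Longrightarrow> binary_word w \<Longrightarrow> binary_word (prepend u w)"
  using nth_mem by (fastforce simp: binary_word_def prepend_def)

lemma lex_le_if_not_lex_less:
  assumes "\<not> lex_less w v" shows "lex_le v w"
proof (cases "v = w")
  case False
  then obtain n where n: "v n \<noteq> w n" "\<forall>m<n. v m = w m"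
    using exists_least_iff[of "\<lambda>n. v n \<noteq> w n"] by (auto simp: fun_eq_iff)
  have "\<not> w n < v n" using assms n unfolding lex_less_def by (metis)
  then show ?thesis using n unfolding lex_le_def lex_less_def by (metis linorder_neqE_nat)
qed (simp add: lex_le_def)

section \<open>The morphism mu on infinite words\<close>

definition mu_inf :: "(nat \<Rightarrow> nat) \<Rightarrow> nat \<Rightarrow> nat" where
  "mu_inf y n = (if even n then y (n div 2) else 1 - y (n div 2))"

lemma binary_mu_inf: "binary_word y \<Longrightarrow> binary_word (mu_inf y)"
  by (auto simp: binary_word_iff mu_inf_def)

lemma mu_inf_square_odd: "mu_inf y m = mu_inf y (Suc m) \<Longrightarrow> odd m"
  by (auto simp: mu_inf_def elim!: evenE; arith)

lemma alternating_run:
  assumes "binary_word w" "\<forall>m. i \<le> m \<longrightarrow> m < i + k \<longrightarrow> w m \<noteq> w (Suc m)"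
  shows "w (i + k) = (if even k then w i else 1 - w i)"
  using assms(2)
proof (induction k)
  case (Suc k)
  have "w (i+k) \<noteq> w (Suc (i+k))" using Suc.prems by auto
  moreover have "w (i+k) = (if even k then w i else 1 - w i)" using Suc by auto
  moreover have "w (i+k) \<le> 1" "w (Suc (i+k)) \<le> 1" "w i \<le> 1"
    using assms(1) by (auto simp: binary_word_iff)
  ultimately show ?case by auto
qed simp

text \<open>Overlaps in a mu-image have even period: an odd period would either force an
  alternating stretch, or move a square of letters by an odd distance.\<close>
lemma overlap_at_mu_inf_even:
  assumes "binary_word y" "overlap_at (mu_inf y) i p" shows "even p"
proof (rule ccontr)
  assume odd_p: "odd p"
  have per: "\<And>j. j \<le> p \<Longrightarrow> mu_inf y (i+j) = mu_inf y (i+j+p)"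
    using assms(2) by (auto simp: overlap_at_def)
  show False
  proof (cases "\<forall>m. i \<le> m \<longrightarrow> m < i + p \<longrightarrow> mu_inf y m \<noteq> mu_inf y (Suc m)")
    case True
    from alternating_run[OF binary_mu_inf[OF assms(1)] True] odd_p
    have "mu_inf y (i+p) = 1 - mu_inf y i" by simp
    moreover have "mu_inf y (i+p) = mu_inf y i" using per[of 0] by simp
    ultimately show False by arith
  next
    case False
    then obtain m where m: "i \<le> m" "m < i+p" "mu_inf y m = mu_inf y (Suc m)" by auto
    have "mu_inf y (m+p) = mu_inf y (Suc (m+p))"
      using per[of "m-i"] per[of "Suc m - i"] m by simp
    then have "odd (m+p)" by (rule mu_inf_square_odd)
    moreover have "odd m" using m(3) by (rule mu_inf_square_odd)
    ultimately show False using odd_p by simp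
  qed
qed

lemma overlap_at_mu_inf_descends:
  assumes "binary_word y" "overlap_at (mu_inf y) i p"
  obtains i' where "overlap_at y i' (p div 2)"
proof -
  have p1: "p \<ge> 1" and per: "\<And>j. j \<le> p \<Longrightarrow> mu_inf y (i+j) = mu_inf y (i+j+p)"
    using assms(2) by (auto simp: overlap_at_def)
  obtain q where q: "p = 2*q" using overlap_at_mu_inf_even[OF assms] by blast
  define s where "s = i div 2"
  have halves: "(i + 2*j) div 2 = s + j" "(i + 2*j + p) div 2 = s + j + q" for j
    unfolding s_def q by auto
  have "y (s+j) = y (s+j+q)" if "j \<le> q" for j
  proof (cases "even i \<or> j = 0")
    case True
    have "mu_inf y (i + 2*j) = mu_inf y (i + 2*j + p)" using per[of "2*j"] that q by simp
    moreover have "y (s+j) \<le> 1" "y (s+j+q) \<le> 1" using assms(1) by (auto simp: binary_word_iff)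
    ultimately show ?thesis using True q unfolding mu_inf_def halves by (auto split: if_splits; arith)
  next
    case False
    have eqs: "i + (2*j-1) = 2*(s+j)" "i + (2*j-1) + p = 2*(s+j+q)"
      using False q unfolding s_def by (auto elim!: oddE)
    have "mu_inf y (2*(s+j)) = mu_inf y (2*(s+j+q))"
      unfolding eqs[symmetric] by (rule per) (use that q in simp)
    then show ?thesis by (simp add: mu_inf_def)
  qed
  then have "overlap_at y s (p div 2)" using p1 q by (simp add: overlap_at_def)
  then show ?thesis by (rule that)
qed

lemma overlap_at_mu_inf_lifts:
  assumes "overlap_at y i p" shows "overlap_at (mu_inf y) (2*i) (2*p)"
proof -
  have "mu_inf y (2*i+j) = mu_inf y (2*i+j+2*p)" if "j \<le> 2*p" for j
  proof -
    have "y (i + j div 2) = y (i + j div 2 + p)" using assms that by (auto simp: overlap_at_def)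
    moreover have "(2*i+j) div 2 = i + j div 2" "(2*i+j+2*p) div 2 = i + j div 2 + p" by auto
    ultimately show ?thesis unfolding mu_inf_def by (simp add: ac_simps)
  qed
  then show ?thesis using assms by (auto simp: overlap_at_def)
qed

lemma overlap_free_mu_inf_iff:
  assumes "binary_word y" shows "overlap_free (mu_inf y) \<longleftrightarrow> overlap_free y"
  using overlap_at_mu_inf_descends[OF assms] overlap_at_mu_inf_lifts
  unfolding overlap_free_iff by metis

definition square_prefix :: "(nat \<Rightarrow> nat) \<Rightarrow> nat \<Rightarrow> bool" where
  "square_prefix w s \<longleftrightarrow> 1 \<le> s \<and> (\<forall>j<s. w j = w (j+s))"

lemma square_prefix_mu_inf_descends:
  assumes "square_prefix (mu_inf y) (2*q)" shows "square_prefix y q"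
proof -
  have "y j = y (j + q)" if "j < q" for j
    using assms that unfolding square_prefix_def
    by (auto dest!: spec[of _ "2*j"] simp: mu_inf_def)
  then show ?thesis using assms by (simp add: square_prefix_def)
qed

lemma mu_nth:
  "i < length xs \<Longrightarrow> mu xs ! (2*i) = (if xs ! i = 0 then 0 else 1)
                   \<and> mu xs ! (Suc (2*i)) = (if xs ! i = 0 then 1 else 0)"
proof (induction xs arbitrary: i)
  case (Cons a xs)
  then show ?case by (cases i) (auto simp: nth_append)
qed simp

lemma length_mu: "length (mu xs) = 2 * length xs"
  by (induction xs) auto

lemma mu_inf_prepend:
  assumes "set u \<subseteq> {0,1}" shows "mu_inf (prepend u y) = prepend (mu u) (mu_inf y)"
proof
  fix n
  show "mu_inf (prepend u y) n = prepend (mu u) (mu_inf y) n"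
  proof (cases "n < 2 * length u")
    case True
    define k where "k = n div 2"
    have k: "k < length u" using True by (simp add: k_def)
    have u01: "u ! k = 0 \<or> u ! k = 1" using assms nth_mem[OF k] by auto
    have "n = 2*k \<or> n = Suc (2*k)" unfolding k_def by presburger
    then show ?thesis
      using mu_nth[OF k] u01 k by (elim disjE) (auto simp: mu_inf_def prepend_def length_mu)
  next
    case False
    then have "\<not> n div 2 < length u" "(n - 2*length u) div 2 = n div 2 - length u"
      "even (n - 2*length u) = even n" by auto
    then show ?thesis using False by (simp add: mu_inf_def prepend_def length_mu)
  qed
qed

lemma mu_inf_lex_descent:
  assumes agree: "\<forall>i<n. mu_inf u i = mu_inf y i" and less: "mu_inf u n < mu_inf y n"
  shows "(\<forall>i<n div 2. u i = y i) \<and> u (n div 2) < y (n div 2)"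
proof -
  have "u i = y i" if "i < n div 2" for i
    using agree[rule_format, of "2*i"] that by (simp add: mu_inf_def)
  moreover have "even n"
  proof (rule ccontr)
    assume odd_n: "odd n"
    then have "2 * (n div 2) < n" by presburger
    then have "u (n div 2) = y (n div 2)" using agree[rule_format, of "2*(n div 2)"] by (simp add: mu_inf_def)
    then show False using less odd_n by (simp add: mu_inf_def)
  qed
  ultimately show ?thesis using less by (simp add: mu_inf_def)
qed

section \<open>The Thue--Morse word tbar\<close>

lemma mu_append: "mu (xs @ ys) = mu xs @ mu ys"
  by (induction xs) auto

lemma set_mu: "set (mu xs) \<subseteq> {0,1}"
  by (induction xs) auto

lemma length_funpow_mu: "length ((mu ^^ k) xs) = 2 ^ k * length xs"
  by (induction k) (auto simp: length_mu)

lemma funpow_mu_prefix: "a \<le> 1 \<Longrightarrow> \<exists>r. (mu ^^ Suc k) [a] = (mu ^^ k) [a] @ r"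
proof (induction k)
  case (Suc k)
  then obtain r where "(mu ^^ Suc k) [a] = (mu ^^ k) [a] @ r" by blast
  then have "(mu ^^ Suc (Suc k)) [a] = (mu ^^ Suc k) [a] @ mu r" by (simp add: mu_append)
  then show ?case by blast
qed auto

lemma funpow_mu_nth_mono:
  assumes "k \<le> l" "n < 2^k" "a \<le> 1" shows "(mu ^^ l) [a] ! n = (mu ^^ k) [a] ! n"
  using assms(1)
proof (induction l rule: dec_induct)
  case (step j)
  obtain r where r: "(mu ^^ Suc j) [a] = (mu ^^ j) [a] @ r" using funpow_mu_prefix[OF assms(3)] by blast
  have "(2::nat)^k \<le> 2^j" using step.hyps(1) by (rule power_increasing) simp
  with assms(2) have "n < 2^j" by (rule less_le_trans)
  then have "n < length ((mu ^^ j) [a])" by (simp add: length_funpow_mu)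
  then show ?case using r step.IH by (simp add: nth_append)
qed simp

lemma less_two_power: "n < 2 ^ Suc n"
  by (induction n) auto

lemma tbar_funpow_mu: "n < 2^k \<Longrightarrow> tbar n = (mu ^^ k) [1] ! n"
  unfolding tbar_def
  using funpow_mu_nth_mono[of "Suc n" "max k (Suc n)" n] funpow_mu_nth_mono[of k "max k (Suc n)" n]
    less_two_power[of n] by simp

lemma binary_tbar: "binary_word tbar"
  unfolding binary_word_def
proof
  fix n
  have "n < length (mu ((mu ^^ n) [1]))" using less_two_power[of n] by (simp add: length_funpow_mu length_mu)
  then have "tbar n \<in> set (mu ((mu ^^ n) [1]))" unfolding tbar_def by simp
  then show "tbar n \<in> {0,1}" using set_mu by blast
qed

lemma mu_inf_tbar: "mu_inf tbar = tbar"
proof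
  fix n :: nat
  define k where "k = n div 2"
  have k: "k < length ((mu ^^ Suc k) [1])" using less_two_power[of k] by (simp only: length_funpow_mu) simp
  have "n < 2 ^ Suc (Suc k)" using less_two_power[of k] unfolding k_def by simp
  then have "tbar n = mu ((mu ^^ Suc k) [1]) ! n" using tbar_funpow_mu[of n "Suc (Suc k)"] by simp
  moreover have "tbar k = (mu ^^ Suc k) [1] ! k" using tbar_funpow_mu[OF less_two_power] .
  moreover have "tbar k \<le> 1" using binary_tbar by (simp add: binary_word_iff)
  moreover have "n = 2*k \<or> n = Suc (2*k)" unfolding k_def by presburger
  ultimately show "mu_inf tbar n = tbar n"
    using mu_nth[OF k] unfolding mu_inf_def k_def[symmetric] by auto
qed

lemma tbar_0 [simp]: "tbar 0 = 1"
  by (simp add: tbar_def)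

lemma tbar_1 [simp]: "tbar 1 = 0" "tbar (Suc 0) = 0"
  using fun_cong[OF mu_inf_tbar, of 1] by (simp_all add: mu_inf_def)

lemma tbar_2 [simp]: "tbar 2 = 0"
  using fun_cong[OF mu_inf_tbar, of 2] by (simp add: mu_inf_def)

lemma tbar_square_odd: "tbar m = tbar (Suc m) \<Longrightarrow> odd m"
  using mu_inf_square_odd[of tbar m] by (simp add: mu_inf_tbar)

text \<open>A binary fixed point of mu_inf is overlap-free: an overlap of period p in it yields one
  of period p/2.\<close>
lemma fixed_point_overlap_free:
  assumes "binary_word y" "mu_inf y = y" shows "overlap_free y"
proof -
  have "\<forall>i. \<not> overlap_at y i p" for p
  proof (induction p rule: less_induct)
    case (less p)
    show ?case
    proof (intro allI notI)
      fix i assume ov: "overlap_at y i p"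
      then have ov': "overlap_at (mu_inf y) i p" using assms(2) by simp
      then obtain i' where "overlap_at y i' (p div 2)"
        by (rule overlap_at_mu_inf_descends[OF assms(1)])
      moreover have "p div 2 < p" using ov by (simp add: overlap_at_def)
      ultimately show False using less by blast
    qed
  qed
  then show ?thesis by (simp add: overlap_free_iff)
qed

lemma overlap_free_tbar: "overlap_free tbar"
  by (rule fixed_point_overlap_free[OF binary_tbar mu_inf_tbar])

text \<open>tbar = 100... has no square prefix: even periods halve, odd periods s >= 3 would
  create the square tbar(s+1) tbar(s+2) at the even position s+1.\<close>
lemma tbar_no_square_prefix: "\<not> square_prefix tbar s"
proof (induction s rule: less_induct)
  case (less s)
  show ?case
  proof
    assume sq: "square_prefix tbar s"
    then have s1: "s \<ge> 1" and per: "\<And>j. j < s \<Longrightarrow> tbar j = tbar (j+s)"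
      by (auto simp: square_prefix_def)
    show False
    proof (cases "even s")
      case True
      then obtain q where q: "s = 2*q" by blast
      have "square_prefix tbar q"
        using square_prefix_mu_inf_descends[of tbar q] sq q by (simp add: mu_inf_tbar)
      then show False using less q s1 by simp
    next
      case False
      have "s \<noteq> 1" using per[of 0] s1 by auto
      then have "s \<ge> 3" using s1 False by presburger
      then have "tbar (Suc s) = tbar (Suc (Suc s))" using per[of 1] per[of 2] by simp
      then have "odd (Suc s)" by (rule tbar_square_odd)
      then show False using False by simp
    qed
  qed
qed

section \<open>The words 1 tbar, 10 tbar and 001001 tbar\<close>

lemma mu_inf_one_tbar: "mu_inf (prepend [1] tbar) = prepend [1,0] tbar"
  by (simp add: mu_inf_prepend mu_inf_tbar)

lemma binary_one_tbar: "binary_word (prepend [1] tbar)"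
  by (simp add: binary_prepend binary_tbar)

lemma one_tbar_period_even:
  assumes "prepend [1] tbar 0 = prepend [1] tbar p" "prepend [1] tbar 1 = prepend [1] tbar (Suc p)"
    "1 \<le> p"
  shows "even p"
proof -
  obtain p' where p': "p = Suc p'" using assms(3) by (cases p) auto
  have "prepend [1] tbar 0 = prepend [1] tbar 1" by simp
  then have "tbar p' = tbar (Suc p')"
    using assms(1,2) unfolding p' prepend_Cons_Suc prepend_Nil by metis
  then have "odd p'" by (rule tbar_square_odd)
  then show ?thesis using p' by simp
qed

text \<open>The only square prefix of 1 tbar is 11: an even period 2q would give tbar the square
  prefix of period q.\<close>
lemma one_tbar_square_prefix: "square_prefix (prepend [1] tbar) r \<Longrightarrow> r = 1"
proof (rule ccontr)
  assume sq: "square_prefix (prepend [1] tbar) r" and r1: "r \<noteq> 1"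
  have r: "r \<ge> 1" and per: "\<And>j. j < r \<Longrightarrow> prepend [1] tbar j = prepend [1] tbar (j+r)"
    using sq by (auto simp: square_prefix_def)
  show False
  proof (cases "even r")
    case True
    then obtain q where q: "r = 2*q" by blast
    have "tbar (2*k) = tbar (2*(k+q))" if "k < q" for k
      using per[of "Suc (2*k)"] that q by (simp add: prepend_def)
    then have "tbar k = tbar (k+q)" if "k < q" for k
      using that fun_cong[OF mu_inf_tbar, of "2*k"] fun_cong[OF mu_inf_tbar, of "2*(k+q)"]
      by (simp add: mu_inf_def)
    then have "square_prefix tbar q" using r q by (simp add: square_prefix_def)
    then show False using tbar_no_square_prefix by blast
  next
    case False
    have "even r" using one_tbar_period_even per[of 0] per[of 1] r r1 by simp
    then show False using False by simp
  qed
qed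

text \<open>1 tbar is overlap-free: later overlaps are overlaps of tbar, and an overlap at position
  0 would be a square prefix of even period, whereas the only square prefix has period 1.\<close>
lemma overlap_free_one_tbar: "overlap_free (prepend [1] tbar)"
  unfolding overlap_free_iff
proof (intro allI notI)
  fix i p assume ov: "overlap_at (prepend [1] tbar) i p"
  then have p: "p \<ge> 1" and per: "\<And>j. j \<le> p \<Longrightarrow> prepend [1] tbar (i+j) = prepend [1] tbar (i+j+p)"
    by (auto simp: overlap_at_def)
  show False
  proof (cases "i = 0")
    case False
    then have "overlap_at tbar (i-1) p" using p per by (auto simp: overlap_at_def prepend_def)
    then show False using overlap_freeD[OF overlap_free_tbar] by blast
  next
    case True
    have "even p" using one_tbar_period_even per[of 0] per[of 1] p True by simp
    moreover have "square_prefix (prepend [1] tbar) p" using p per True by (simp add: square_prefix_def)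
    ultimately show False using one_tbar_square_prefix by fastforce
  qed
qed

lemma overlap_free_one_zero_tbar: "overlap_free (prepend [1,0] tbar)"
  using overlap_free_mu_inf_iff[OF binary_one_tbar] overlap_free_one_tbar
  unfolding mu_inf_one_tbar by blast

text \<open>The only square prefix of 10 tbar = 1010 01... is 1010: even periods halve to the
  square prefix 11 of 1 tbar, odd periods q >= 5 move the square 00 at position 3 to an even
  position of the mu-image.\<close>
lemma one_zero_tbar_square_prefix: "square_prefix (prepend [1,0] tbar) q \<Longrightarrow> q = 2"
proof -
  assume sq: "square_prefix (prepend [1,0] tbar) q"
  have q: "q \<ge> 1" and per: "\<And>j. j < q \<Longrightarrow> prepend [1,0] tbar j = prepend [1,0] tbar (j+q)"
    using sq by (auto simp: square_prefix_def)
  show "q = 2"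
  proof (cases "even q")
    case True
    then obtain r where r: "q = 2*r" by blast
    have "square_prefix (prepend [1] tbar) r"
      using square_prefix_mu_inf_descends[of "prepend [1] tbar" r] sq r
      unfolding mu_inf_one_tbar by blast
    then show ?thesis using one_tbar_square_prefix r by simp
  next
    case False
    have "q \<noteq> 1" "q \<noteq> 3" using per[of 0] by (auto simp: prepend_def)
    then have "q \<ge> 5" using q False by presburger
    then have "prepend [1,0] tbar (3+q) = prepend [1,0] tbar (Suc (3+q))"
      using per[of 3] per[of 4] by (simp add: prepend_def add.commute)
    then have "mu_inf (prepend [1] tbar) (3+q) = mu_inf (prepend [1] tbar) (Suc (3+q))"
      unfolding mu_inf_one_tbar .
    then have "odd (3+q)" by (rule mu_inf_square_odd)
    then show ?thesis using False by simp
  qed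
qed

text \<open>The candidate least word 001001 tbar = 00 mu_inf(10 tbar).\<close>
definition least_word :: "nat \<Rightarrow> nat" where
  "least_word = prepend [0,0,1,0,0,1] tbar"

lemma least_word_tail: "2 \<le> n \<Longrightarrow> least_word n = mu_inf (prepend [1,0] tbar) (n-2)"
proof -
  assume n: "2 \<le> n"
  have "least_word = prepend [0,0] (prepend (mu [1,0]) (mu_inf tbar))"
    by (simp add: least_word_def mu_inf_tbar flip: prepend_append)
  also have "\<dots> = prepend [0,0] (mu_inf (prepend [1,0] tbar))"
    by (simp add: mu_inf_prepend)
  finally have eq: "least_word = prepend [0,0] (mu_inf (prepend [1,0] tbar))" .
  show ?thesis using n unfolding eq by (simp add: prepend_beyond numeral_2_eq_2)
qed

lemma least_word_prefix [simp]: "n < 6 \<Longrightarrow> least_word n = [0,0,1,0,0,1] ! n"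
  by (simp add: least_word_def prepend_def)

lemma least_word_6 [simp]: "least_word 6 = 1"
  by (simp add: least_word_def prepend_def)

lemma least_word_suffix: "6 \<le> n \<Longrightarrow> least_word n = tbar (n-6)"
  by (simp add: least_word_def prepend_beyond numeral_eq_Suc)

lemma binary_least_word: "binary_word least_word"
  unfolding least_word_def by (simp add: binary_prepend binary_tbar)

lemma overlap_free_mu_inf_one_zero_tbar: "overlap_free (mu_inf (prepend [1,0] tbar))"
  using overlap_free_mu_inf_iff[of "prepend [1,0] tbar"] overlap_free_one_zero_tbar
  by (simp add: binary_prepend binary_tbar)

text \<open>An overlap starting in the prefix 00 has even period: odd periods are either short
  (checked directly) or move the square 00 at position 3 to the even position p+1 of the
  mu-image 1001 tbar.\<close>
lemma least_word_overlap_even: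
  assumes ov: "overlap_at least_word i p" and i: "i < 2" shows "even p"
proof (rule ccontr)
  assume odd_p: "odd p"
  have p: "1 \<le> p" and per: "\<And>j. j \<le> p \<Longrightarrow> least_word (i+j) = least_word (i+j+p)"
    using ov by (auto simp: overlap_at_def)
  have shift: "least_word j = least_word (j+p)" if "i \<le> j" "j \<le> i + p" for j
    using per[of "j-i"] that by simp
  have "p \<noteq> 1" using shift[of 1] i by auto
  moreover have "p \<noteq> 3" using shift[of 3] i by auto
  ultimately have "p \<ge> 5" using p odd_p by presburger
  then have "least_word (p+3) = least_word (p+4)"
    using shift[of 3] shift[of 4] i by (simp add: add.commute)
  then have "mu_inf (prepend [1,0] tbar) (p+1) = mu_inf (prepend [1,0] tbar) (Suc (p+1))"
    using least_word_tail[of "p+3"] least_word_tail[of "p+4"] by simp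
  then have "odd (p+1)" by (rule mu_inf_square_odd)
  then show False using odd_p by simp
qed

lemma overlap_free_least_word: "overlap_free least_word"
  unfolding overlap_free_iff
proof (intro allI notI)
  fix i p assume ov: "overlap_at least_word i p"
  then have p: "1 \<le> p" and per: "\<And>j. j \<le> p \<Longrightarrow> least_word (i+j) = least_word (i+j+p)"
    by (auto simp: overlap_at_def)
  consider (late) "2 \<le> i" | (start) "i = 0" | (second) "i = 1" by force
  then show False
  proof cases
    case late
    have "overlap_at (mu_inf (prepend [1,0] tbar)) (i-2) p"
      using p per late by (auto simp: overlap_at_def least_word_tail)
    then show False using overlap_freeD[OF overlap_free_mu_inf_one_zero_tbar] by blast
  next
    case start
    text \<open>The prefix 00 would reappear as a square at the even position p-2 of 1001 tbar.\<close>
    have "p \<ge> 2" using least_word_overlap_even[OF ov] p start by presburger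
    define r where "r = p - 2"
    then have r: "p = Suc (Suc r)" using \<open>p \<ge> 2\<close> by simp
    have "least_word (Suc (Suc r)) = least_word (Suc (Suc (Suc r)))"
      using per[of 0] per[of 1] r start by simp
    then have "mu_inf (prepend [1,0] tbar) r = mu_inf (prepend [1,0] tbar) (Suc r)"
      using least_word_tail[of "Suc (Suc r)"] least_word_tail[of "Suc (Suc (Suc r))"] by simp
    then have "odd r" by (rule mu_inf_square_odd)
    then show False using least_word_overlap_even[OF ov] r start by simp
  next
    case second
    text \<open>Here 10 tbar would have a square prefix of period p/2, forcing p = 4.\<close>
    obtain q where q: "p = 2*q" using least_word_overlap_even[OF ov] second by (auto elim: evenE)
    have "mu_inf (prepend [1,0] tbar) (2*k) = mu_inf (prepend [1,0] tbar) (2*(k+q))" if "k < q" for k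
      using per[of "Suc (2*k)"] that q second by (simp add: least_word_tail algebra_simps)
    then have "square_prefix (prepend [1,0] tbar) q"
      using p q by (auto simp: square_prefix_def mu_inf_def)
    then have "q = 2" by (rule one_zero_tbar_square_prefix)
    then have "p = 4" using q by simp
    then show False using per[of 0] second by simp
  qed
qed

section \<open>Factorization of overlap-free words\<close>

lemma square_then_change: "overlap_free v \<Longrightarrow> v i = v (i+1) \<Longrightarrow> v (i+1) \<noteq> v (i+2)"
  using overlap_at_1 overlap_freeD by blast

lemma no_alternating_five:
  assumes "binary_word v" "overlap_free v"
    "v m \<noteq> v (m+1)" "v (m+1) \<noteq> v (m+2)" "v (m+2) \<noteq> v (m+3)" "v (m+3) \<noteq> v (m+4)"
  shows False
proof -
  have "v m \<le> 1" "v (m+1) \<le> 1" "v (m+2) \<le> 1" "v (m+3) \<le> 1" "v (m+4) \<le> 1"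
    using assms(1) by (auto simp: binary_word_iff)
  then have "v m = v (m+2)" "v (m+1) = v (m+3)" "v (m+2) = v (m+4)" using assms(3-6) by arith+
  then have "overlap_at v m 2" by (rule overlap_at_2)
  then show False using assms(2) overlap_freeD by blast
qed

text \<open>In an overlap-free binary word, a factor aabaa cannot be preceded by a letter:
  the letter must be b, and then baabaa extends to the overlap baabaab.\<close>
lemma no_preceded_aabaa:
  assumes "binary_word v" "overlap_free v" "1 \<le> i"
    "v i = v (i+1)" "v (i+1) \<noteq> v (i+2)" "v (i+2) \<noteq> v (i+3)" "v (i+3) = v (i+4)"
  shows False
proof -
  obtain h where h: "i = h + 1" using assms(3) by (metis le_add_diff_inverse2)
  have b: "v h \<le> 1" "v (h+1) \<le> 1" "v (h+2) \<le> 1" "v (h+3) \<le> 1" "v (h+4) \<le> 1" "v (h+5) \<le> 1"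
    "v (h+6) \<le> 1" using assms(1) by (auto simp: binary_word_iff)
  have a: "v (h+1) = v (h+2)" "v (h+2) \<noteq> v (h+3)" "v (h+3) \<noteq> v (h+4)" "v (h+4) = v (h+5)"
    using assms(4-7) h by (simp_all add: eval_nat_numeral)
  have c1: "v h \<noteq> v (h+1)"
  proof
    assume "v h = v (h+1)"
    then have "overlap_at v h 1" using a overlap_at_1 by simp
    then show False using assms(2) overlap_freeD by blast
  qed
  have c2: "v (h+5) \<noteq> v (h+6)"
    using square_then_change[OF assms(2), of "h+4"] a(4) by (simp add: eval_nat_numeral)
  have "v h = v (h+3)" "v (h+1) = v (h+4)" "v (h+2) = v (h+5)" "v (h+3) = v (h+6)"
    using a b c1 c2 by arith+
  then have "overlap_at v h 3" by (rule overlap_at_3)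
  then show False using assms(2) overlap_freeD by blast
qed

text \<open>After a square of letters at a position i >= 1, no square starts at a position of the
  opposite parity: the continuation is forced up to the next square two or four letters on.\<close>
lemma square_parity:
  assumes "binary_word v" "overlap_free v"
  shows "1 \<le> i \<Longrightarrow> v i = v (i+1) \<Longrightarrow> v (i+2*n+1) \<noteq> v (i+2*n+2)"
proof (induction n arbitrary: i rule: less_induct)
  case (less n)
  have n1: "v (i+1) \<noteq> v (i+2)" using square_then_change[OF assms(2)] less.prems by blast
  have n3: "v (i+3) \<noteq> v (i+4)"
  proof
    assume s3: "v (i+3) = v (i+4)"
    show False
    proof (cases "v (i+2) = v (i+3)")
      case True
      then show False using square_then_change[OF assms(2), of "i+2"] s3 by (simp add: eval_nat_numeral)
    next
      case False
      show False using no_preceded_aabaa[OF assms less.prems n1 False s3] .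
    qed
  qed
  consider (zero) "n = 0" | (one) "n = 1"
    | (square_next) "n \<ge> 2" "v (i+2) = v (i+3)" | (square_later) "n \<ge> 2" "v (i+2) \<noteq> v (i+3)"
    by linarith
  then show ?case
  proof cases
    case square_next
    have "v (i+2 + 2*(n-1) + 1) \<noteq> v (i+2 + 2*(n-1) + 2)"
    proof (rule less.IH)
      show "v (i+2) = v (i+2+1)" using square_next by (simp add: eval_nat_numeral)
    qed (use square_next in auto)
    moreover have "i+2 + 2*(n-1) = i + 2*n" using square_next by simp
    ultimately show ?thesis by metis
  next
    case square_later
    text \<open>Then v(i+1..i+4) alternates, so the square must come at i+4.\<close>
    have "v (i+4 + 2*(n-2) + 1) \<noteq> v (i+4 + 2*(n-2) + 2)"
    proof (rule less.IH)
      show "v (i+4) = v (i+4+1)"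
        using no_alternating_five[OF assms, of "i+1"] n1 n3 square_later by (auto simp: eval_nat_numeral)
    qed (use square_later in auto)
    moreover have "i+4 + 2*(n-2) = i + 2*n" using square_later by simp
    ultimately show ?thesis by metis
  qed (use n1 n3 in \<open>simp_all add: eval_nat_numeral\<close>)
qed

lemma mu_inf_from_no_squares:
  assumes "binary_word v" "\<forall>j. v (k+2*j) \<noteq> v (k+2*j+1)"
  shows "v (k+m) = mu_inf (\<lambda>n. v (k+2*n)) m"
proof (cases "even m")
  case False
  then obtain a where a: "m = 2*a+1" using oddE by blast
  have "v (k+2*a) \<le> 1" "v (k+2*a+1) \<le> 1" using assms(1) by (auto simp: binary_word_iff)
  moreover have "v (k+2*a) \<noteq> v (k+2*a+1)" using assms(2) by blast
  ultimately have "v (k+2*a+1) = 1 - v (k+2*a)" by arith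
  then show ?thesis using a by (simp add: mu_inf_def add.assoc)
qed (auto simp: mu_inf_def elim!: evenE)

lemma overlap_free_factorization:
  assumes "binary_word v" "overlap_free v"
  obtains k u where "k = 1 \<or> k = 2" "binary_word u" "\<forall>m. v (k+m) = mu_inf u m"
proof -
  have "\<exists>k. (k = 1 \<or> k = 2) \<and> (\<forall>j. v (k+2*j) \<noteq> v (k+2*j+1))"
  proof (rule ccontr)
    assume "\<not> ?thesis"
    then obtain j1 j2 where j1: "v (1+2*j1) = v (1+2*j1+1)" and j2: "v (2+2*j2) = v (2+2*j2+1)"
      by blast
    show False
    proof (cases "j1 \<le> j2")
      case True
      have "v (1+2*j1 + 2*(j2-j1) + 1) \<noteq> v (1+2*j1 + 2*(j2-j1) + 2)"
        using square_parity[OF assms, of "1+2*j1" "j2-j1"] j1 by simp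
      moreover have "1+2*j1 + 2*(j2-j1) + 1 = 2+2*j2" using True by simp
      ultimately show False using j2 by (simp add: add.assoc)
    next
      case False
      have "v (2+2*j2 + 2*(j1-j2-1) + 1) \<noteq> v (2+2*j2 + 2*(j1-j2-1) + 2)"
        using square_parity[OF assms, of "2+2*j2" "j1-j2-1"] j2 by simp
      moreover have "2+2*j2 + 2*(j1-j2-1) + 1 = 1+2*j1" using False by simp
      ultimately show False using j1 by (simp add: add.assoc)
    qed
  qed
  then obtain k where "k = 1 \<or> k = 2" "\<forall>j. v (k+2*j) \<noteq> v (k+2*j+1)" by blast
  moreover have "binary_word (\<lambda>n. v (k+2*n))" using assms(1) by (simp add: binary_word_def)
  ultimately show ?thesis using that mu_inf_from_no_squares[OF assms(1)] by blast
qed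

section \<open>Minimality\<close>

text \<open>An overlap-free binary word beginning with 100 is a mu-image: deleting one letter
  is impossible since 00 would sit at the even position 1 of a mu-image.\<close>
lemma overlap_free_100_is_mu_image:
  assumes "binary_word v" "overlap_free v" "v 0 = 1" "v 1 = 0" "v 2 = 0"
  obtains u where "binary_word u" "v = mu_inf u"
proof -
  obtain k u where k: "k = 1 \<or> k = 2" and u: "binary_word u" and vu: "\<forall>m. v (k+m) = mu_inf u m"
    by (rule overlap_free_factorization[OF assms(1,2)])
  have "k \<noteq> 1"
  proof
    assume "k = 1"
    then have "mu_inf u 0 = mu_inf u 1"
      using vu[rule_format, of 0] vu[rule_format, of 1] assms(4,5) by (simp add: numeral_2_eq_2)
    then show False using mu_inf_square_odd[of u 0] by simp
  qed
  then have k2: "k = 2" using k by simp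
  have "v = prepend [1,0] (mu_inf u)"
  proof
    fix x
    show "v x = prepend [1,0] (mu_inf u) x"
    proof (cases x)
      case (Suc y)
      then show ?thesis using vu k2 assms(4) by (cases y) auto
    qed (simp add: assms(3))
  qed
  also have "\<dots> = mu_inf (prepend [1] u)" by (simp add: mu_inf_prepend)
  finally show ?thesis using that binary_prepend[OF _ u, of "[1]"] by simp
qed

text \<open>tbar is the lexicographically least overlap-free binary word beginning with 1;
  a first position where v drops below tbar descends along mu to half its size.\<close>
lemma tbar_least_starting_with_one:
  "binary_word v \<Longrightarrow> overlap_free v \<Longrightarrow> v 0 = 1 \<Longrightarrow> \<forall>i<n. v i = tbar i \<Longrightarrow> v n < tbar n \<Longrightarrow> False"
proof (induction n arbitrary: v rule: less_induct)
  case (less n)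
  have "2 < n"
  proof (rule ccontr)
    assume "\<not> 2 < n"
    then have "n = 0 \<or> n = 1 \<or> n = 2" by auto
    then show False using less.prems(3,5) by auto
  qed
  then have "v 1 = 0" "v 2 = 0" using less.prems(4) by auto
  then obtain u where u: "binary_word u" "v = mu_inf u"
    by (rule overlap_free_100_is_mu_image[OF less.prems(1-3)])
  have "overlap_free u" using less.prems(2) overlap_free_mu_inf_iff[OF u(1)] u(2) by simp
  moreover have "u 0 = 1" using less.prems(3) u(2) by (simp add: mu_inf_def)
  moreover have "(\<forall>i<n div 2. u i = tbar i) \<and> u (n div 2) < tbar (n div 2)"
    using mu_inf_lex_descent[of n u tbar] less.prems(4,5) u(2) by (simp add: mu_inf_tbar)
  ultimately show False using less.IH[of "n div 2" u] \<open>2 < n\<close> u(1) by auto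
qed

text \<open>No overlap-free binary word is below 001001 tbar: a first difference inside the
  prefix 001001 creates one of the overlaps 000 or 0010010, and a later one contradicts
  the minimality of tbar.\<close>
lemma least_word_minimal:
  assumes bw: "binary_word w" and ow: "overlap_free w" and lt: "lex_less w least_word" shows False
proof -
  obtain n where agree: "\<forall>i<n. w i = least_word i" and less: "w n < least_word n"
    using lt unfolding lex_less_def by blast
  have "n \<notin> {0,1,3,4}"
  proof
    assume "n \<in> {0,1,3,4}"
    then show False using less by auto
  qed
  then consider (zeros_012) "n = 2" | (zeros_345) "n = 5" | (period_3) "n = 6" | (in_tbar) "n > 6"
    by fastforce
  then show False
  proof cases
    case zeros_012
    then have "overlap_at w 0 1" using agree less by (intro overlap_at_1) (auto simp: numeral_2_eq_2)
    then show False using ow overlap_freeD by blast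
  next
    case zeros_345
    then have "overlap_at w 3 1" using agree less by (intro overlap_at_1) auto
    then show False using ow overlap_freeD by blast
  next
    case period_3
    then have "overlap_at w 0 3" using agree less by (intro overlap_at_3) (auto simp: numeral_2_eq_2)
    then show False using ow overlap_freeD by blast
  next
    case in_tbar
    define v where "v = (\<lambda>i. w (6+i))"
    have "v i = tbar i" if "i < n-6" for i
      using agree[rule_format, of "6+i"] least_word_suffix[of "6+i"] that by (simp add: v_def)
    moreover have "v (n-6) < tbar (n-6)" using less least_word_suffix[of n] in_tbar by (simp add: v_def)
    moreover have "v 0 = 1" using agree in_tbar by (simp add: v_def)
    moreover have "binary_word v" using bw by (simp add: binary_word_def v_def)
    moreover have "overlap_free v" unfolding v_def by (rule overlap_free_suffix[OF ow])
    ultimately show False using tbar_least_starting_with_one by blast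
  qed
qed

theorem theorem5:
  shows "binary_word (prepend [0,0,1,0,0,1] tbar)
       \<and> overlap_free (prepend [0,0,1,0,0,1] tbar)
       \<and> (\<forall>w. binary_word w \<and> overlap_free w \<longrightarrow> lex_le (prepend [0,0,1,0,0,1] tbar) w)"
proof -
  have "lex_le least_word w" if "binary_word w" "overlap_free w" for w
    using lex_le_if_not_lex_less least_word_minimal that by blast
  then show ?thesis
    using binary_least_word overlap_free_least_word unfolding least_word_def by blast
qed

end
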